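(* For all integers $n,k\ge 0$ and every real (or complex) $x\neq 1$, \[ \sum_{d=0}^k d^n x^d = \sum_{i=0}^n \frac{e_{n,i}\, x^i - e_{n,i}^k\, x^{k+i+1}}{(1-x)^{n+1}}. \]
   Context: Convention: $0^0=1$. The Eulerian numbers $e_{n,i}$ are defined by $e_{0,0}=1$, $e_{n,i}=0$ whenever $i\le 0$ (unless $n=i=0$) or $i>n$, and $e_{n,i}=i\,e_{n-1,i}+(n-i+1)\,e_{n-1,i-1}$ for all other integers $n,i$. For a fixed integer parameter $k$, the numbers $e^k_{n,i}$ are defined by $e^k_{0,0}=1$, $e^k_{n,i}=0$ whenever $i<0$ or $i>n$, and $e^k_{n,i}=(k+i+1)\,e^k_{n-1,i}+(n-k-i)\,e^k_{n-1,i-1}$ for all other integers $n,i$. *)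

theory Defs
  imports Complex_Main
begin

fun eulerian :: "nat \<Rightarrow> int \<Rightarrow> int" where
  "eulerian 0 i = (if i = 0 then 1 else 0)"
| "eulerian (Suc m) i =
     (if i \<le> 0 \<or> i > int (Suc m) then 0
      else i * eulerian m i + (int (Suc m) - i + 1) * eulerian m (i - 1))"

fun eulerian_k :: "int \<Rightarrow> nat \<Rightarrow> int \<Rightarrow> int" where
  "eulerian_k k 0 i = (if i = 0 then 1 else 0)"
| "eulerian_k k (Suc m) i =
     (if i < 0 \<or> i > int (Suc m) then 0
      else (k + i + 1) * eulerian_k k m i + (int (Suc m) - k - i) * eulerian_k k m (i - 1))"

end

theory Submission
  imports Defs
begin

(* Let P_k(x) = sum_i e^k_{n,i} x^i; then P_{-1} is the Eulerian polynomial, as e_{n,i} = e^{-1}_{n,i}.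
   The two recurrences give e^k_{n,i} - e^{k+1}_{n,i-1} = (-1)^i (k+1)^n C(n+1,i), that is
   P_k(x) - x P_{k+1}(x) = (k+1)^n (1-x)^(n+1). Multiplying by x^(k+1) and telescoping in k yields
   (1-x)^(n+1) sum_{d<=k} d^n x^d = P_{-1}(x) - x^(k+1) P_k(x) in every commutative ring. *)

lemma eulerian_k_eq_0: "i < 0 \<or> int n < i \<Longrightarrow> eulerian_k k n i = 0"
  by (cases n) auto

lemma eulerian_k_Suc:
  "eulerian_k k (Suc n) i =
     (k + i + 1) * eulerian_k k n i + (int (Suc n) - k - i) * eulerian_k k n (i - 1)"
  using eulerian_k_eq_0[of i n k] eulerian_k_eq_0[of "i - 1" n k] by auto

lemma eulerian_eq_eulerian_k: "eulerian n i = eulerian_k (-1) n i"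
proof (induction n arbitrary: i)
  case 0
  show ?case by simp
next
  case (Suc n)
  then show ?case
    using eulerian_k_eq_0[of "i - 1" n "-1"] by (cases "i = 0") auto
qed

lemma Suc_times_binomial_int:
  "int (Suc j) * int (Suc n choose Suc j) = (int n + 1 - int j) * int (Suc n choose j)"
proof (cases "j \<le> Suc n")
  case True
  have "Suc j * (Suc n choose Suc j) = (Suc n - j) * (Suc n choose j)"
    using Suc_times_binomial[of j n] binomial_absorb_comp[of "Suc n" j] by simp
  then show ?thesis
    using True by (metis of_nat_diff of_nat_mult of_nat_Suc add.commute)
next
  case False
  then show ?thesis by (simp add: binomial_eq_0 del: binomial_Suc_Suc)
qed

lemma eulerian_k_diff:
  "eulerian_k k n (int i) - eulerian_k (k + 1) n (int i - 1) =
     (k + 1) ^ n * (-1) ^ i * int (Suc n choose i)"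
proof (induction n arbitrary: i)
  case 0
  show ?case by (cases i) (auto simp: eulerian_k_eq_0)
next
  case (Suc n)
  show ?case
  proof (cases i)
    case 0
    have "eulerian_k k (Suc n) 0 - eulerian_k (k + 1) (Suc n) (-1) = (k + 1) * eulerian_k k n 0"
      unfolding eulerian_k_Suc by (simp add: eulerian_k_eq_0)
    also have "\<dots> = (k + 1) ^ Suc n"
      using Suc.IH[of 0] eulerian_k_eq_0[of "-1" n "k + 1"] by simp
    finally show ?thesis
      using 0 by simp
  next
    case (Suc j)
    let ?A = "int (Suc n choose Suc j)" and ?B = "int (Suc n choose j)"
    have IH_Suc: "eulerian_k k n (int j + 1) - eulerian_k (k + 1) n (int j) =
        (k + 1) ^ n * (-1) ^ Suc j * ?A"
      using Suc.IH[of "Suc j"] by (simp add: add.commute)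
    have IH: "eulerian_k k n (int j) - eulerian_k (k + 1) n (int j - 1) =
        (k + 1) ^ n * (-1) ^ j * ?B"
      using Suc.IH[of j] .
    have coeff: "(k + int j + 2) * ?A - (int n - k - int j) * ?B = (k + 1) * (?A + ?B)"
      using Suc_times_binomial_int[of j n] by (simp add: algebra_simps)
    have "eulerian_k k (Suc n) (int j + 1) - eulerian_k (k + 1) (Suc n) (int j) =
        (k + int j + 2) * (eulerian_k k n (int j + 1) - eulerian_k (k + 1) n (int j))
      + (int n - k - int j) * (eulerian_k k n (int j) - eulerian_k (k + 1) n (int j - 1))"
      unfolding eulerian_k_Suc by (simp add: algebra_simps)
    also have "\<dots> = - ((k + 1) ^ n * (-1) ^ j) * ((k + int j + 2) * ?A - (int n - k - int j) * ?B)"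
      unfolding IH_Suc IH by (simp add: algebra_simps)
    also have "\<dots> = (k + 1) ^ Suc n * (-1) ^ Suc j * (?A + ?B)"
      unfolding coeff by (simp add: algebra_simps)
    finally show ?thesis
      using Suc by (simp add: add.commute)
  qed
qed

definition eulerian_k_poly :: "int \<Rightarrow> nat \<Rightarrow> 'a::comm_ring_1 \<Rightarrow> 'a" where
  "eulerian_k_poly k n x = (\<Sum>i\<le>n. of_int (eulerian_k k n (int i)) * x ^ i)"

lemma one_minus_power_expansion:
  fixes x :: "'a::comm_ring_1"
  shows "(1 - x) ^ n = (\<Sum>i\<le>n. of_int ((-1) ^ i * int (n choose i)) * x ^ i)"
proof -
  have "(1 - x) ^ n = (-x + 1) ^ n" by simp
  also have "\<dots> = (\<Sum>i\<le>n. of_nat (n choose i) * (-x) ^ i)"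
    by (simp only: binomial_ring power_one mult_1_right)
  also have "\<dots> = (\<Sum>i\<le>n. of_int ((-1) ^ i * int (n choose i)) * x ^ i)"
    by (rule sum.cong[OF refl])
      (simp only: power_minus[of x] of_int_mult of_int_power of_int_minus of_int_1
        of_int_of_nat_eq mult_ac)
  finally show ?thesis .
qed

lemma eulerian_k_poly_diff:
  fixes x :: "'a::comm_ring_1"
  shows "eulerian_k_poly k n x - x * eulerian_k_poly (k + 1) n x =
    of_int ((k + 1) ^ n) * (1 - x) ^ Suc n"
proof -
  have extend: "eulerian_k_poly k n x = (\<Sum>i\<le>Suc n. of_int (eulerian_k k n (int i)) * x ^ i)"
    unfolding eulerian_k_poly_def by (simp add: eulerian_k_eq_0)
  have shift: "x * eulerian_k_poly (k + 1) n x =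
      (\<Sum>i\<le>Suc n. of_int (eulerian_k (k + 1) n (int i - 1)) * x ^ i)"
    unfolding eulerian_k_poly_def sum.atMost_Suc_shift
    by (simp add: eulerian_k_eq_0 sum_distrib_left mult_ac)
  show ?thesis
    unfolding extend shift one_minus_power_expansion sum_distrib_left sum_subtractf[symmetric]
    by (rule sum.cong[OF refl])
      (simp only: left_diff_distrib[symmetric] of_int_diff[symmetric] eulerian_k_diff of_int_mult mult.assoc)
qed

lemma one_minus_power_mult_sum_powers:
  fixes x :: "'a::comm_ring_1"
  shows "(1 - x) ^ Suc n * (\<Sum>d\<le>k. of_nat d ^ n * x ^ d) =
    eulerian_k_poly (-1) n x - x ^ Suc k * eulerian_k_poly (int k) n x"
proof (induction k)
  case 0
  show ?case
    using eulerian_k_poly_diff[of "-1" n x] by (simp add: mult_ac)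
next
  case (Suc k)
  have "(1 - x) ^ Suc n * (\<Sum>d\<le>Suc k. of_nat d ^ n * x ^ d) =
      eulerian_k_poly (-1) n x - x ^ Suc k * eulerian_k_poly (int k) n x
      + x ^ Suc k * (of_int ((int k + 1) ^ n) * (1 - x) ^ Suc n)"
    unfolding sum.atMost_Suc distrib_left Suc.IH by (simp add: mult_ac add.commute)
  also have "\<dots> = eulerian_k_poly (-1) n x - x ^ Suc (Suc k) * eulerian_k_poly (int (Suc k)) n x"
    unfolding eulerian_k_poly_diff[symmetric] by (simp add: algebra_simps)
  finally show ?case .
qed

lemma sum_powers_eulerian:
  fixes x :: "'a::field"
  assumes "x \<noteq> 1"
  shows "(\<Sum>d = 0..k. of_nat d ^ n * x ^ d) =
    (\<Sum>i = 0..n. (of_int (eulerian n (int i)) * x ^ i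
       - of_int (eulerian_k (int k) n (int i)) * x ^ (k + i + 1)) / (1 - x) ^ (n + 1))"
proof -
  have eulerian_poly: "eulerian_k_poly (-1) n x = (\<Sum>i = 0..n. of_int (eulerian n (int i)) * x ^ i)"
    by (simp add: eulerian_k_poly_def eulerian_eq_eulerian_k atLeast0AtMost)
  have shifted_poly: "x ^ Suc k * eulerian_k_poly (int k) n x =
      (\<Sum>i = 0..n. of_int (eulerian_k (int k) n (int i)) * x ^ (k + i + 1))"
    unfolding eulerian_k_poly_def sum_distrib_left atLeast0AtMost
    by (rule sum.cong[OF refl]) (simp add: power_add mult_ac)
  have "(1 - x) ^ (n + 1) \<noteq> 0"
    using assms by simp
  moreover have "(1 - x) ^ (n + 1) * (\<Sum>d = 0..k. of_nat d ^ n * x ^ d) =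
    (\<Sum>i = 0..n. of_int (eulerian n (int i)) * x ^ i
       - of_int (eulerian_k (int k) n (int i)) * x ^ (k + i + 1))"
    using one_minus_power_mult_sum_powers[of x n k]
    unfolding eulerian_poly shifted_poly sum_subtractf atLeast0AtMost by simp
  ultimately show ?thesis
    unfolding sum_divide_distrib[symmetric] by (simp add: eq_divide_eq mult.commute)
qed

theorem proposition2p1:
  fixes n k :: nat
  shows "(\<forall>x :: real. x \<noteq> 1 \<longrightarrow>
            (\<Sum>d = 0..k. real d ^ n * x ^ d) =
            (\<Sum>i = 0..n. (of_int (eulerian n (int i)) * x ^ i
                 - of_int (eulerian_k (int k) n (int i)) * x ^ (k + i + 1)) / (1 - x) ^ (n + 1)))
       \<and> (\<forall>x :: complex. x \<noteq> 1 \<longrightarrow>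
            (\<Sum>d = 0..k. of_nat d ^ n * x ^ d) =
            (\<Sum>i = 0..n. (of_int (eulerian n (int i)) * x ^ i
                 - of_int (eulerian_k (int k) n (int i)) * x ^ (k + i + 1)) / (1 - x) ^ (n + 1)))"
  using sum_powers_eulerian[where 'a = real] sum_powers_eulerian[where 'a = complex] by blast

end
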